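(* There exists a diameter-perfect code of minimum distance $2r$ in $(\mathbb Z^m,d_a)$ in each of the following cases: (i) $m\in\{1,2\}$ and $r\ge1$ arbitrary; (ii) $m\ge3$ and $r=1$.
   Context: $d_a(\mathbf x,\mathbf y)=\max\{\sum_{i:x_i>y_i}(x_i-y_i),\sum_{i:x_i<y_i}(y_i-x_i)\}$ on $\mathbb Z^m$; the minimum distance $d_a(\mathcal C)$ of a code is the minimum distance between distinct codewords. An anticode of diameter $D$ is a subset of $\mathbb Z^m$ whose points are pairwise at $d_a$-distance at most $D$. The density of $\mathcal C$ is $\mu(\mathcal C)=\lim_{k\to\infty}|\mathcal C\cap\{-k,\dots,k\}^m|/(2k+1)^m$. A code $\mathcal C$ with minimum distance $d$ is diameter-perfect if its density exists and there is a finite anticode $S$ of diameter $d-1$ with $\mu(\mathcal C)\cdot|S|=1$. *)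

theory Defs
  imports Complex_Main
begin

text \<open>Points of Z^m are represented as functions nat => int vanishing outside {0..<m}.\<close>

definition lattice_pts :: "nat \<Rightarrow> (nat \<Rightarrow> int) set" where
  "lattice_pts m = {x. \<forall>i\<ge>m. x i = 0}"

definition dist_a :: "nat \<Rightarrow> (nat \<Rightarrow> int) \<Rightarrow> (nat \<Rightarrow> int) \<Rightarrow> int" where
  "dist_a m x y = max (\<Sum>i\<in>{i. i < m \<and> x i > y i}. x i - y i)
                      (\<Sum>i\<in>{i. i < m \<and> x i < y i}. y i - x i)"

definition has_min_dist :: "nat \<Rightarrow> (nat \<Rightarrow> int) set \<Rightarrow> int \<Rightarrow> bool" where
  "has_min_dist m C d \<longleftrightarrow>
     (\<forall>x\<in>C. \<forall>y\<in>C. x \<noteq> y \<longrightarrow> dist_a m x y \<ge> d) \<and>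
     (\<exists>x\<in>C. \<exists>y\<in>C. x \<noteq> y \<and> dist_a m x y = d)"

definition is_anticode :: "nat \<Rightarrow> (nat \<Rightarrow> int) set \<Rightarrow> int \<Rightarrow> bool" where
  "is_anticode m S D \<longleftrightarrow> S \<subseteq> lattice_pts m \<and>
     (\<forall>x\<in>S. \<forall>y\<in>S. dist_a m x y \<le> D)"

definition box :: "nat \<Rightarrow> nat \<Rightarrow> (nat \<Rightarrow> int) set" where
  "box m k = {x \<in> lattice_pts m. \<forall>i<m. - int k \<le> x i \<and> x i \<le> int k}"

definition density_seq :: "nat \<Rightarrow> (nat \<Rightarrow> int) set \<Rightarrow> nat \<Rightarrow> real" where
  "density_seq m C k = real (card (C \<inter> box m k)) / (2 * real k + 1) ^ m"

definition diameter_perfect :: "nat \<Rightarrow> (nat \<Rightarrow> int) set \<Rightarrow> int \<Rightarrow> bool" where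
  "diameter_perfect m C d \<longleftrightarrow>
     C \<subseteq> lattice_pts m \<and> has_min_dist m C d \<and>
     (\<exists>\<mu>. density_seq m C \<longlonglongrightarrow> \<mu> \<and>
        (\<exists>S. finite S \<and> is_anticode m S (d - 1) \<and> \<mu> * real (card S) = 1))"

end

theory Submission
  imports Defs
begin

text \<open>All three codes are lattices cut out by congruences, and each is diameter-perfect because
  its index in \<open>\<int>\<^sup>m\<close> equals the size of an anticode of diameter \<open>d - 1\<close>. In dimension 1 the
  multiples of \<open>2r\<close> face an interval of \<open>2r\<close> points; in dimension 2 the lattice
  \<open>{x. r | x\<^sub>0, 3r | x\<^sub>1 - x\<^sub>0}\<close> of index \<open>3r\<^sup>2\<close> faces a hexagon of \<open>3r\<^sup>2\<close> points; for
  \<open>r = 1\<close> the lattice \<open>{x. m + 1 | \<Sum> (i + 1) x\<^sub>i}\<close> faces \<open>{0, e\<^sub>0, \<dots>, e\<^sub>m\<^sub>-\<^sub>1}\<close>. The density of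
  such a lattice is computed by slicing boxes along the last coordinate: every slice is a
  residue class, whose size in \<open>{-k..k}\<close> is \<open>(2k + 1)/q + O(1)\<close>.\<close>

lemma dist_a_eq_max_sums:
  "dist_a m x y = max (\<Sum>i<m. max (x i - y i) 0) (\<Sum>i<m. max (y i - x i) 0)"
proof -
  have pos_part: "(\<Sum>i\<in>{i. i < m \<and> P i}. f i) = (\<Sum>i<m. if P i then f i else 0)"
    for P :: "nat \<Rightarrow> bool" and f :: "nat \<Rightarrow> int"
  proof -
    have "{i. i < m \<and> P i} = {i\<in>{..<m}. P i}" by auto
    then show ?thesis by (simp add: sum.inter_filter[symmetric])
  qed
  have "(\<Sum>i<m. if y i < x i then x i - y i else 0) = (\<Sum>i<m. max (x i - y i) 0)"
    "(\<Sum>i<m. if x i < y i then y i - x i else 0) = (\<Sum>i<m. max (y i - x i) 0)"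
    by (auto intro!: sum.cong simp: max_def)
  then show ?thesis
    unfolding dist_a_def pos_part by simp
qed

lemma dist_a_eq_scaled:
  fixes c :: int
  assumes "c \<ge> 0" and "\<And>i. i < m \<Longrightarrow> x i - y i = c * d i"
  shows "dist_a m x y = c * max (\<Sum>i<m. max (d i) 0) (\<Sum>i<m. max (- d i) 0)"
proof -
  have max_scale: "max (c * u) (c * v) = c * max u v" for u v :: int
    using \<open>c \<ge> 0\<close> by (cases u v rule: le_cases) (simp_all add: max_absorb1 max_absorb2 mult_left_mono)
  have pos: "max (x i - y i) 0 = c * max (d i) 0" and neg: "max (y i - x i) 0 = c * max (- d i) 0"
    if "i < m" for i
  proof -
    have "x i - y i = c * d i" "y i - x i = c * - d i" using assms(2)[OF that] by simp_all
    then show "max (x i - y i) 0 = c * max (d i) 0" "max (y i - x i) 0 = c * max (- d i) 0"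
      using max_scale[of "d i" 0] max_scale[of "- d i" 0] by simp_all
  qed
  have "(\<Sum>i<m. max (x i - y i) 0) = c * (\<Sum>i<m. max (d i) 0)"
    "(\<Sum>i<m. max (y i - x i) 0) = c * (\<Sum>i<m. max (- d i) 0)"
    using pos neg by (simp_all add: sum_distrib_left)
  then show ?thesis by (simp add: dist_a_eq_max_sums max_scale)
qed

lemma lattice_pts_eqI:
  assumes "x \<in> lattice_pts m" "y \<in> lattice_pts m" "\<And>i. i < m \<Longrightarrow> x i = y i"
  shows "x = y"
proof
  fix i show "x i = y i"
    using assms by (cases "i < m") (auto simp: lattice_pts_def)
qed

lemma finite_box: "finite (box n k)"
proof (induction n)
  case 0
  have "box 0 k \<subseteq> {\<lambda>_. 0}" by (auto simp: box_def lattice_pts_def)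
  then show ?case using finite_subset by blast
next
  case (Suc n)
  have "box (Suc n) k \<subseteq> (\<lambda>(y, t). y(n := t)) ` (box n k \<times> {-int k..int k})"
  proof
    fix x assume x: "x \<in> box (Suc n) k"
    have "x(n := 0) \<in> box n k" "x n \<in> {-int k..int k}"
      using x by (auto simp: box_def lattice_pts_def)
    then show "x \<in> (\<lambda>(y, t). y(n := t)) ` (box n k \<times> {-int k..int k})"
      by (intro rev_image_eqI[of "(x(n := 0), x n)"]) auto
  qed
  then show ?case using Suc finite_subset by blast
qed

lemma card_Int_box_Suc:
  assumes "C \<subseteq> lattice_pts (Suc n)"
  shows "card (C \<inter> box (Suc n) k) = (\<Sum>y\<in>box n k. card {t\<in>{-int k..int k}. y(n := t) \<in> C})"
proof -
  let ?F = "\<lambda>y. {t\<in>{-int k..int k}. y(n := t) \<in> C}"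
  have "bij_betw (\<lambda>x. (x(n := 0), x n)) (C \<inter> box (Suc n) k) (SIGMA y:box n k. ?F y)"
  proof (rule bij_betw_byWitness[where f' = "\<lambda>(y, t). y(n := t)"])
    have "y n = 0" if "y \<in> box n k" for y
      using that by (auto simp: box_def lattice_pts_def)
    then show "\<forall>a'\<in>SIGMA y:box n k. ?F y. (\<lambda>x. (x(n := 0), x n)) ((\<lambda>(y, t). y(n := t)) a') = a'"
      by (auto simp: fun_eq_iff)
    show "(\<lambda>x. (x(n := 0), x n)) ` (C \<inter> box (Suc n) k) \<subseteq> (SIGMA y:box n k. ?F y)"
      using assms by (auto simp: box_def lattice_pts_def)
    show "(\<lambda>(y, t). y(n := t)) ` (SIGMA y:box n k. ?F y) \<subseteq> C \<inter> box (Suc n) k"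
      by (auto simp: box_def lattice_pts_def)
  qed auto
  then have "card (C \<inter> box (Suc n) k) = card (SIGMA y:box n k. ?F y)"
    by (rule bij_betw_same_card)
  also have "\<dots> = (\<Sum>y\<in>box n k. card (?F y))"
    by (rule card_SigmaI) (auto simp: finite_box intro: rev_finite_subset[OF finite_atLeastAtMost_int])
  finally show ?thesis .
qed

lemma card_box: "card (box n k) = (2 * k + 1) ^ n"
proof (induction n)
  case 0
  have "box 0 k = {\<lambda>_. 0}" by (auto simp: box_def lattice_pts_def)
  then show ?case by simp
next
  case (Suc n)
  have fiber: "{t\<in>{-int k..int k}. y(n := t) \<in> lattice_pts (Suc n)} = {-int k..int k}"
    if "y \<in> box n k" for y
    using that by (auto simp: box_def lattice_pts_def)
  have "box (Suc n) k = lattice_pts (Suc n) \<inter> box (Suc n) k" by (auto simp: box_def)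
  then have "card (box (Suc n) k) = (\<Sum>y\<in>box n k. card {-int k..int k})"
    using card_Int_box_Suc[of "lattice_pts (Suc n)" n k] fiber by simp
  then show ?case using Suc by (simp add: nat_add_distrib)
qed

text \<open>The map \<open>t \<mapsto> t div q\<close> sends the residue class injectively into
  \<open>{lo div q..hi div q}\<close> and hits every interior value.\<close>

lemma card_residue_class_interval:
  fixes q lo hi c :: int
  assumes q: "q > 0" and "lo \<le> hi"
  shows "\<bar>q * int (card {t\<in>{lo..hi}. t mod q = c mod q}) - (hi - lo + 1)\<bar> \<le> 3 * q"
proof -
  define S where "S = {t\<in>{lo..hi}. t mod q = c mod q}"
  define a where "a = lo div q"
  define b where "b = hi div q"
  have a: "q * a \<le> lo" "lo < q * a + q" and b: "q * b \<le> hi" "hi < q * b + q"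
    unfolding a_def b_def using q
    by (smt (verit) div_mult_mod_eq mult.commute pos_mod_sign pos_mod_bound)+
  have "finite S" unfolding S_def by (rule finite_subset[of _ "{lo..hi}"]) auto
  have inj: "inj_on (\<lambda>t. t div q) S"
    by (rule inj_onI) (metis (mono_tags, lifting) S_def div_mult_mod_eq mem_Collect_eq)
  then have card_S: "card S = card ((\<lambda>t. t div q) ` S)" by (simp add: card_image)
  have "(\<lambda>t. t div q) ` S \<subseteq> {a..b}"
    using q by (auto simp: S_def a_def b_def intro!: zdiv_mono1)
  then have "card S \<le> card {a..b}" unfolding card_S by (intro card_mono) auto
  moreover have "a \<le> b" using q \<open>lo \<le> hi\<close> by (simp add: a_def b_def zdiv_mono1)
  ultimately have "int (card S) \<le> b - a + 1" by simp
  then have upper: "q * int (card S) \<le> q * (b - a + 1)"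
    using q by (simp add: mult_left_mono)
  have "{a + 1..b - 1} \<subseteq> (\<lambda>t. t div q) ` S"
  proof
    fix j assume j: "j \<in> {a + 1..b - 1}"
    define t where "t = q * j + c mod q"
    have "q * a + q \<le> q * j" "q * j + q \<le> q * b"
      using j q mult_left_mono[of "a + 1" j q] mult_left_mono[of "j + 1" b q]
      by (simp_all add: algebra_simps)
    moreover have "0 \<le> c mod q" "c mod q < q" using q by simp_all
    ultimately have "t \<in> {lo..hi}" using a b unfolding t_def atLeastAtMost_iff by linarith
    moreover have "t mod q = c mod q" "t div q = j" using q by (simp_all add: t_def)
    ultimately have "t \<in> S" "j = t div q" by (simp_all add: S_def)
    then show "j \<in> (\<lambda>t. t div q) ` S" by (rule rev_image_eqI)
  qed
  then have "card {a + 1..b - 1} \<le> card S" unfolding card_S by (intro card_mono) (auto simp: \<open>finite S\<close>)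
  then have "b - a - 1 \<le> int (card S)" by simp
  then have lower: "q * (b - a - 1) \<le> q * int (card S)"
    using q by (simp add: mult_left_mono)
  have "q * b - q * a - q \<le> q * int (card S)" "q * int (card S) \<le> q * b - q * a + q"
    using upper lower by (simp_all add: algebra_simps)
  then show ?thesis using a b unfolding S_def[symmetric] abs_le_iff by linarith
qed

text \<open>The relative error is \<open>B / (2k + 1)\<close>; writing the bound as \<open>B (2k + 1)^m / (2k + 1)\<close>
  instead of \<open>B (2k + 1)^(m - 1)\<close> keeps it correct for \<open>m = 0\<close>.\<close>

definition approx_density :: "nat \<Rightarrow> (nat \<Rightarrow> int) set \<Rightarrow> real \<Rightarrow> real \<Rightarrow> bool" where
  "approx_density m C N B \<longleftrightarrow>
     (\<forall>k. \<bar>N * real (card (C \<inter> box m k)) - (2 * real k + 1) ^ m\<bar>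
            \<le> B * (2 * real k + 1) ^ m / (2 * real k + 1))"

lemma approx_density_lattice_pts: "approx_density n (lattice_pts n) 1 0"
proof -
  have "lattice_pts n \<inter> box n k = box n k" for k by (auto simp: box_def)
  then show ?thesis by (simp add: approx_density_def card_box add.commute)
qed

lemma card_Int_box_Suc_residue_classes:
  fixes q :: int and g :: "(nat \<Rightarrow> int) \<Rightarrow> int"
  assumes q: "q > 0" and C: "C \<subseteq> lattice_pts (Suc n)"
    and fiber: "\<And>y t. y \<in> lattice_pts n \<Longrightarrow> y(n := t) \<in> C \<longleftrightarrow> y \<in> A \<and> t mod q = g y mod q"
  shows "\<bar>q * real (card (C \<inter> box (Suc n) k)) - real (card (A \<inter> box n k)) * (2 * real k + 1)\<bar>
    \<le> real (card (A \<inter> box n k)) * (3 * q)"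
proof -
  define G where "G y = card {t\<in>{-int k..int k}. t mod q = g y mod q}" for y
  have "card (C \<inter> box (Suc n) k) = (\<Sum>y\<in>box n k. if y \<in> A then G y else 0)"
    unfolding card_Int_box_Suc[OF C]
  proof (rule sum.cong)
    fix y assume "y \<in> box n k"
    then have "y \<in> lattice_pts n" by (simp add: box_def)
    then show "card {t\<in>{-int k..int k}. y(n := t) \<in> C} = (if y \<in> A then G y else 0)"
      by (simp add: fiber G_def)
  qed simp
  also have "\<dots> = (\<Sum>y\<in>A \<inter> box n k. G y)"
    by (metis Int_commute sum.inter_restrict[OF finite_box])
  finally have X_sum: "q * real (card (C \<inter> box (Suc n) k)) = (\<Sum>y\<in>A \<inter> box n k. q * real (G y))"
    by (simp add: sum_distrib_left)
  have G: "\<bar>q * real (G y) - (2 * real k + 1)\<bar> \<le> 3 * q" for y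
  proof -
    have "\<bar>q * int (G y) - (int k - - int k + 1)\<bar> \<le> 3 * q"
      unfolding G_def by (rule card_residue_class_interval) (use q in auto)
    then have "real_of_int \<bar>q * int (G y) - (int k - - int k + 1)\<bar> \<le> real_of_int (3 * q)"
      by (simp only: of_int_le_iff)
    then show ?thesis by simp
  qed
  have "\<bar>\<Sum>y\<in>A \<inter> box n k. q * real (G y) - (2 * real k + 1)\<bar>
      \<le> (\<Sum>y\<in>A \<inter> box n k. \<bar>q * real (G y) - (2 * real k + 1)\<bar>)" by (rule sum_abs)
  also have "\<dots> \<le> real (card (A \<inter> box n k)) * (3 * q)" using sum_mono[OF G] by simp
  finally show ?thesis by (simp add: X_sum sum_subtractf)
qed

lemma approx_density_fiber:
  fixes q :: int and g :: "(nat \<Rightarrow> int) \<Rightarrow> int"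
  assumes A: "approx_density n A M B" and "M \<ge> 0" and q: "q > 0"
    and C: "C \<subseteq> lattice_pts (Suc n)"
    and fiber: "\<And>y t. y \<in> lattice_pts n \<Longrightarrow> y(n := t) \<in> C \<longleftrightarrow> y \<in> A \<and> t mod q = g y mod q"
  shows "approx_density (Suc n) C (M * q) (3 * M * q + B)"
  unfolding approx_density_def
proof
  fix k
  define P where "P = 2 * real k + 1"
  define X where "X = real (card (C \<inter> box (Suc n) k))"
  define a where "a = real (card (A \<inter> box n k))"
  have P: "P > 0" by (simp add: P_def)
  have slices: "\<bar>q * X - a * P\<bar> \<le> a * (3 * q)"
    using card_Int_box_Suc_residue_classes[OF q C fiber] by (simp add: X_def a_def P_def)
  have "card (A \<inter> box n k) \<le> (2 * k + 1) ^ n"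
    using card_mono[OF finite_box, of "A \<inter> box n k"] by (simp add: card_box)
  then have "real (card (A \<inter> box n k)) \<le> real ((2 * k + 1) ^ n)" by (simp only: of_nat_le_iff)
  then have a_le: "a \<le> P ^ n" by (simp add: a_def P_def add.commute)
  have base: "\<bar>M * a - P ^ n\<bar> \<le> B * P ^ n / P"
    using A by (simp add: approx_density_def a_def P_def)
  have "\<bar>M * (q * X - a * P)\<bar> \<le> M * (a * (3 * q))"
    using slices \<open>M \<ge> 0\<close> by (simp add: abs_mult mult_left_mono)
  also have "\<dots> \<le> M * (P ^ n * (3 * q))"
    using a_le \<open>M \<ge> 0\<close> q by (intro mult_left_mono mult_right_mono) simp_all
  moreover have "\<bar>P * (M * a - P ^ n)\<bar> \<le> B * P ^ n"
    using mult_left_mono[OF base, of P] P by (simp add: abs_mult)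
  moreover have "M * q * X - P ^ Suc n = M * (q * X - a * P) + P * (M * a - P ^ n)"
    by (simp add: algebra_simps)
  ultimately have "\<bar>M * q * X - P ^ Suc n\<bar> \<le> M * (P ^ n * (3 * q)) + B * P ^ n"
    using abs_triangle_ineq[of "M * (q * X - a * P)" "P * (M * a - P ^ n)"] by linarith
  also have "\<dots> = (3 * M * q + B) * (P ^ Suc n / P)"
    using P by (simp add: algebra_simps)
  finally show "\<bar>M * q * real (card (C \<inter> box (Suc n) k)) - (2 * real k + 1) ^ Suc n\<bar>
      \<le> (3 * M * q + B) * (2 * real k + 1) ^ Suc n / (2 * real k + 1)"
    by (simp add: X_def P_def)
qed

lemma approx_density_tendsto:
  assumes bound: "approx_density m C N B" and N: "N > 0"
  shows "density_seq m C \<longlonglongrightarrow> 1 / N"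
proof -
  have "\<bar>density_seq m C k - 1 / N\<bar> \<le> inverse (real (Suc k)) * (\<bar>B\<bar> / N)" for k
  proof -
    define P where "P = 2 * real k + 1"
    have P: "P > 0" by (simp add: P_def)
    have "density_seq m C k - 1 / N = (N * real (card (C \<inter> box m k)) - P ^ m) / (N * P ^ m)"
      using N P by (simp add: density_seq_def P_def field_simps)
    also have "\<bar>\<dots>\<bar> = \<bar>N * real (card (C \<inter> box m k)) - P ^ m\<bar> / (N * P ^ m)"
      using N P by (simp add: abs_divide)
    also have "\<dots> \<le> (B * P ^ m / P) / (N * P ^ m)"
      using bound N P unfolding approx_density_def P_def by (intro divide_right_mono) auto
    also have "\<dots> = inverse P * (B / N)"
      using N P by (simp add: divide_simps)
    also have "\<dots> \<le> inverse P * (\<bar>B\<bar> / N)"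
      using N P by (intro mult_left_mono divide_right_mono) simp_all
    also have "\<dots> \<le> inverse (real (Suc k)) * (\<bar>B\<bar> / N)"
      using N by (intro mult_right_mono le_imp_inverse_le) (auto simp: P_def)
    finally show ?thesis .
  qed
  then have "(\<lambda>k. density_seq m C k - 1 / N) \<longlonglongrightarrow> 0"
    by (intro tendsto_0_le[OF LIMSEQ_inverse_real_of_nat, where K = "\<bar>B\<bar> / N"] always_eventually)
      simp
  then show ?thesis by (simp add: LIM_zero_iff)
qed

lemma diameter_perfectI:
  assumes "C \<subseteq> lattice_pts m" "has_min_dist m C d"
    and "approx_density m C (real (card S)) B" "card S > 0" "is_anticode m S (d - 1)"
  shows "diameter_perfect m C d"
  unfolding diameter_perfect_def
proof (intro conjI exI)
  show "density_seq m C \<longlonglongrightarrow> 1 / real (card S)"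
    using assms(4) by (intro approx_density_tendsto[OF assms(3)]) simp
  show "finite S" using assms(4) by (rule card_ge_0_finite)
  show "1 / real (card S) * real (card S) = 1" using assms(4) by simp
qed (use assms in auto)

lemma dist_a_Suc_0: "dist_a (Suc 0) x y = \<bar>x 0 - y 0\<bar>"
  by (simp add: dist_a_eq_max_sums max_def)

lemma dist_a_two:
  "dist_a 2 x y = max (max (x 0 - y 0) 0 + max (x 1 - y 1) 0) (max (y 0 - x 0) 0 + max (y 1 - x 1) 0)"
  by (simp add: dist_a_eq_max_sums numeral_2_eq_2)

lemma approx_density_multiples:
  fixes q :: int
  assumes q: "q > 0"
  shows "approx_density 1 {x\<in>lattice_pts 1. q dvd x 0} (of_int q) (3 * of_int q)"
proof -
  have "approx_density (Suc 0) {x\<in>lattice_pts 1. q dvd x 0} (1 * real_of_int q) (3 * 1 * real_of_int q + 0)"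
    by (rule approx_density_fiber[where g = "\<lambda>_. 0", OF approx_density_lattice_pts _ q])
      (auto simp: lattice_pts_def dvd_eq_mod_eq_0)
  then show ?thesis by simp
qed

lemma diameter_perfect_multiples:
  fixes q :: int
  assumes q: "q > 0"
  shows "diameter_perfect 1 {x\<in>lattice_pts 1. q dvd x 0} q"
proof -
  define C where "C = {x\<in>lattice_pts 1. q dvd x 0}"
  define e where "e a = ((\<lambda>_. 0)(0 := a) :: nat \<Rightarrow> int)" for a
  define S where "S = e ` {0..<q}"
  have e_lattice: "e a \<in> lattice_pts 1" for a by (simp add: e_def lattice_pts_def)
  have "has_min_dist 1 C q"
    unfolding has_min_dist_def
  proof (intro conjI ballI impI)
    fix x y assume xy: "x \<in> C" "y \<in> C" "x \<noteq> y"
    have "x 0 \<noteq> y 0"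
    proof
      assume "x 0 = y 0"
      then have "x = y" using xy by (intro lattice_pts_eqI[of _ 1]) (auto simp: C_def)
      then show False using xy by simp
    qed
    moreover have "q dvd x 0 - y 0" using xy by (simp add: C_def dvd_diff)
    ultimately have "q \<le> \<bar>x 0 - y 0\<bar>"
      using dvd_imp_le_int[of "x 0 - y 0" q] q by simp
    then show "q \<le> dist_a 1 x y" by (simp add: dist_a_Suc_0)
  next
    have "e 0 \<in> C" "e q \<in> C" "e 0 \<noteq> e q" "dist_a 1 (e 0) (e q) = q"
      using q e_lattice by (auto simp: C_def e_def dist_a_Suc_0 fun_eq_iff)
    then show "\<exists>x\<in>C. \<exists>y\<in>C. x \<noteq> y \<and> dist_a 1 x y = q" by blast
  qed
  moreover have "card S = nat q"
  proof -
    have "inj_on e {0..<q}" by (rule inj_onI) (metis e_def fun_upd_same)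
    then show ?thesis by (simp add: S_def card_image)
  qed
  moreover have "is_anticode 1 S (q - 1)"
    unfolding is_anticode_def S_def using e_lattice by (auto simp: dist_a_Suc_0 e_def)
  ultimately show ?thesis
    using q approx_density_multiples[OF q]
    by (intro diameter_perfectI[where S = S]) (simp_all add: C_def)
qed

lemma hexagonal_code_min_dist:
  fixes R :: int
  assumes R: "R > 0"
  shows "has_min_dist 2 {x\<in>lattice_pts 2. R dvd x 0 \<and> 3 * R dvd x 1 - x 0} (2 * R)"
  unfolding has_min_dist_def
proof (intro conjI ballI impI)
  let ?C = "{x\<in>lattice_pts 2. R dvd x 0 \<and> 3 * R dvd x 1 - x 0}"
  fix x y assume xy: "x \<in> ?C" "y \<in> ?C" "x \<noteq> y"
  have "R dvd x 0 - y 0" "3 * R dvd (x 1 - x 0) - (y 1 - y 0)"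
    using xy by (simp_all add: dvd_diff)
  then obtain a s where a: "x 0 - y 0 = R * a" and s: "(x 1 - x 0) - (y 1 - y 0) = 3 * R * s"
    by (elim dvdE)
  define b where "b = a + 3 * s"
  have b: "x 1 - y 1 = R * b" using a s by (simp add: b_def algebra_simps)
  have "a \<noteq> 0 \<or> b \<noteq> 0"
  proof (rule ccontr)
    assume "\<not> (a \<noteq> 0 \<or> b \<noteq> 0)"
    then have "x i = y i" if "i < 2" for i
      using a b that R by (auto simp: less_2_cases_iff)
    then show False using xy lattice_pts_eqI[of x 2 y] by blast
  qed
  then have "2 \<le> max (max a 0 + max b 0) (max (- a) 0 + max (- b) 0)"
    unfolding b_def by (cases "0 \<le> a"; cases "0 \<le> a + 3 * s") (simp_all add: max_def, presburger+)
  moreover have "dist_a 2 x y = R * max (max a 0 + max b 0) (max (- a) 0 + max (- b) 0)"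
  proof -
    define d where "d = ((\<lambda>_. b)(0 := a) :: nat \<Rightarrow> int)"
    have "dist_a 2 x y = R * max (\<Sum>i<2. max (d i) 0) (\<Sum>i<2. max (- d i) 0)"
      by (rule dist_a_eq_scaled) (use R a b in \<open>auto simp: d_def less_2_cases_iff\<close>)
    then show ?thesis by (simp add: d_def numeral_2_eq_2)
  qed
  ultimately show "2 * R \<le> dist_a 2 x y"
    using R by (simp add: mult.commute mult_left_mono)
next
  let ?C = "{x\<in>lattice_pts 2. R dvd x 0 \<and> 3 * R dvd x 1 - x 0}"
  have "(\<lambda>_. 0) \<in> ?C" "(\<lambda>_. 0)(0 := R, 1 := R) \<in> ?C" "(\<lambda>_. 0) \<noteq> (\<lambda>_. 0)(0 := R, 1 := R)"
    using R by (auto simp: lattice_pts_def fun_eq_iff)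
  moreover have "dist_a 2 (\<lambda>_. 0) ((\<lambda>_. 0)(0 := R, 1 := R)) = 2 * R" using R by (simp add: dist_a_two)
  ultimately show "\<exists>x\<in>?C. \<exists>y\<in>?C. x \<noteq> y \<and> dist_a 2 x y = 2 * R" by blast
qed

text \<open>The anticode is the hexagon \<open>0 \<le> a, b < 2R\<close>, \<open>R \<le> a + b < 3R\<close>: column \<open>i\<close> and column
  \<open>i + R\<close> of it together contain \<open>3R\<close> points, so it is the bijective image of \<open>{0..<R} \<times> {0..<3R}\<close>.\<close>

lemma diameter_perfect_hexagonal:
  fixes R :: int
  assumes R: "R > 0"
  shows "diameter_perfect 2 {x\<in>lattice_pts 2. R dvd x 0 \<and> 3 * R dvd x 1 - x 0} (2 * R)"
proof -
  define C where "C = {x\<in>lattice_pts 2. R dvd x 0 \<and> 3 * R dvd x 1 - x 0}"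
  define p where "p a b = ((\<lambda>_. 0)(0 := a, 1 := b) :: nat \<Rightarrow> int)" for a b
  define f where "f = (\<lambda>(i, j). if j < R + i then p i (j + R - i) else p (i + R) (j - R - i))"
  define S where "S = f ` ({0..<R} \<times> {0..<3 * R})"
  have p_lattice: "p a b \<in> lattice_pts 2" for a b by (simp add: p_def lattice_pts_def)
  have "approx_density (Suc 1) C (of_int R * of_int (3 * R)) (3 * of_int R * of_int (3 * R) + 3 * of_int R)"
  proof (rule approx_density_fiber[where g = "\<lambda>y. y 0", OF approx_density_multiples[OF R]])
    fix y t assume "y \<in> lattice_pts 1"
    then have "y(1 := t) \<in> lattice_pts 2" by (auto simp: lattice_pts_def)
    then show "y(1 := t) \<in> C \<longleftrightarrow>
        y \<in> {x\<in>lattice_pts 1. R dvd x 0} \<and> t mod (3 * R) = y 0 mod (3 * R)"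
      using \<open>y \<in> lattice_pts 1\<close> by (simp add: C_def mod_eq_dvd_iff)
  qed (use R in \<open>auto simp: C_def numeral_2_eq_2\<close>)
  moreover have "card S = nat R * nat (3 * R)"
  proof -
    have "inj_on f ({0..<R} \<times> {0..<3 * R})"
    proof (rule inj_onI)
      fix u v assume uv: "u \<in> {0..<R} \<times> {0..<3 * R}" "v \<in> {0..<R} \<times> {0..<3 * R}" "f u = f v"
      then have "f u 0 = f v 0" "f u 1 = f v 1" by simp_all
      then show "u = v" using uv(1,2) by (auto simp: f_def p_def split: if_splits)
    qed
    then show ?thesis by (simp add: S_def card_image card_cartesian_product)
  qed
  moreover have "is_anticode 2 S (2 * R - 1)"
    unfolding is_anticode_def
  proof (intro conjI ballI)
    show "S \<subseteq> lattice_pts 2" using p_lattice by (auto simp: S_def f_def)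
    have hexagon: "0 \<le> x 0 \<and> x 0 < 2 * R \<and> 0 \<le> x 1 \<and> x 1 < 2 * R \<and> R \<le> x 0 + x 1 \<and> x 0 + x 1 < 3 * R"
      if "x \<in> S" for x
      using that by (auto simp: S_def f_def p_def)
    fix x y assume "x \<in> S" "y \<in> S"
    then show "dist_a 2 x y \<le> 2 * R - 1"
      using hexagon[of x] hexagon[of y] by (simp add: dist_a_two max_def)
  qed
  ultimately show ?thesis
    using R hexagonal_code_min_dist[OF R]
    by (intro diameter_perfectI[where S = S]) (auto simp: C_def numeral_2_eq_2 nat_mult_distrib)
qed

lemma nonneg_sum_le_one_cases:
  fixes f :: "nat \<Rightarrow> int"
  assumes nonneg: "\<And>i. i < m \<Longrightarrow> f i \<ge> 0" and sum: "(\<Sum>i<m. f i) \<le> 1"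
  obtains "\<And>i. i < m \<Longrightarrow> f i = 0"
    | j where "j < m" "\<And>i. i < m \<Longrightarrow> f i = (if i = j then 1 else 0)"
proof (cases "\<forall>i<m. f i = 0")
  case False
  then obtain j where j: "j < m" "f j \<noteq> 0" by blast
  have split: "(\<Sum>i<m. f i) = f j + (\<Sum>i\<in>{..<m} - {j}. f i)"
    using j by (simp add: sum.remove)
  have rest: "(\<Sum>i\<in>{..<m} - {j}. f i) \<ge> 0" by (intro sum_nonneg) (simp add: nonneg)
  have "f j = 1" using split rest sum j nonneg[of j] by linarith
  then have "(\<Sum>i\<in>{..<m} - {j}. f i) = 0" using split rest sum by linarith
  then have "f i = 0" if "i < m" "i \<noteq> j" for i
    using sum_nonneg_eq_0_iff[of "{..<m} - {j}" f] nonneg that by auto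
  then show ?thesis using that(2)[OF j(1)] \<open>f j = 1\<close> by auto
qed (use that(1) in blast)

lemma weighted_sum_unit:
  fixes f w :: "nat \<Rightarrow> int"
  assumes "j < m" "\<And>i. i < m \<Longrightarrow> f i = (if i = j then 1 else 0)"
  shows "(\<Sum>i<m. w i * f i) = w j"
proof -
  have "(\<Sum>i<m. w i * f i) = (\<Sum>i<m. if i = j then w i else 0)"
    using assms(2) by (intro sum.cong) auto
  then show ?thesis using assms(1) by (simp add: sum.delta)
qed

text \<open>A nonzero difference \<open>u\<close> of two points at distance at most \<open>1\<close> is \<open>\<plusminus>e\<^sub>i\<close> or
  \<open>e\<^sub>i - e\<^sub>j\<close> with \<open>i \<noteq> j\<close>, so its weight \<open>\<Sum> (i + 1) u\<^sub>i\<close> lies strictly between \<open>-(m + 1)\<close>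
  and \<open>m + 1\<close> and is nonzero.\<close>

lemma weighted_sum_not_dvd:
  fixes u :: "nat \<Rightarrow> int"
  assumes nonzero: "\<exists>i<m. u i \<noteq> 0"
    and pos: "(\<Sum>i<m. max (u i) 0) \<le> 1" and neg: "(\<Sum>i<m. max (- u i) 0) \<le> 1"
  shows "\<not> int (m + 1) dvd (\<Sum>i<m. int (i + 1) * u i)"
proof
  assume dvd: "int (m + 1) dvd (\<Sum>i<m. int (i + 1) * u i)"
  define p where "p i = max (u i) 0" for i
  define q where "q i = max (- u i) 0" for i
  define W where "W f = (\<Sum>i<m. int (i + 1) * f i)" for f :: "nat \<Rightarrow> int"
  have u: "u i = p i - q i" and disjoint: "p i = 1 \<Longrightarrow> q i \<noteq> 1" for i
    by (auto simp: p_def q_def max_def split: if_splits)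
  have "(\<Sum>i<m. int (i + 1) * u i) = W p - W q"
    unfolding W_def u by (simp add: sum_subtractf right_diff_distrib)
  then have dvd_W: "int (m + 1) dvd W p - W q" using dvd by simp
  have W_cases: "(\<forall>i<m. f i = 0) \<and> W f = 0 \<or> (\<exists>j<m. f j = 1 \<and> W f = int (j + 1))"
    if "\<And>i. f i \<ge> 0" "(\<Sum>i<m. f i) \<le> 1" for f
  proof (rule nonneg_sum_le_one_cases[of m f])
    show "(\<Sum>i<m. f i) \<le> 1" "\<And>i. i < m \<Longrightarrow> f i \<ge> 0" using that by simp_all
    show ?thesis if "\<And>i. i < m \<Longrightarrow> f i = 0"
      using that by (simp add: W_def)
    show ?thesis if "j < m" "\<And>i. i < m \<Longrightarrow> f i = (if i = j then 1 else 0)" for j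
      using that weighted_sum_unit[OF that] by (auto simp: W_def)
  qed
  have "(\<forall>i<m. p i = 0) \<and> W p = 0 \<or> (\<exists>i<m. p i = 1 \<and> W p = int (i + 1))"
    using W_cases[of p] pos by (simp add: p_def)
  moreover have "(\<forall>i<m. q i = 0) \<and> W q = 0 \<or> (\<exists>j<m. q j = 1 \<and> W q = int (j + 1))"
    using W_cases[of q] neg by (simp add: q_def)
  moreover have "\<not> ((\<forall>i<m. p i = 0) \<and> (\<forall>i<m. q i = 0))" using nonzero u by force
  ultimately have "W p \<noteq> W q" "\<bar>W p - W q\<bar> < int (m + 1)"
    using disjoint by (auto simp: abs_less_iff)
  then show False
    using dvd_W dvd_imp_le_int[of "W p - W q" "int (m + 1)"] by simp
qed

lemma weighted_sum_code_min_dist: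
  assumes "m \<ge> 1"
  shows "has_min_dist m {x\<in>lattice_pts m. int (m + 1) dvd (\<Sum>i<m. int (i + 1) * x i)} 2"
  unfolding has_min_dist_def
proof (intro conjI ballI impI)
  let ?C = "{x\<in>lattice_pts m. int (m + 1) dvd (\<Sum>i<m. int (i + 1) * x i)}"
  fix x y assume xy: "x \<in> ?C" "y \<in> ?C" "x \<noteq> y"
  define u where "u i = x i - y i" for i
  have "\<exists>i<m. u i \<noteq> 0"
    using xy lattice_pts_eqI[of x m y] by (auto simp: u_def)
  moreover have "int (m + 1) dvd (\<Sum>i<m. int (i + 1) * u i)"
  proof -
    have "(\<Sum>i<m. int (i + 1) * u i) = (\<Sum>i<m. int (i + 1) * x i) - (\<Sum>i<m. int (i + 1) * y i)"
      by (simp add: u_def sum_subtractf right_diff_distrib)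
    then show ?thesis using xy by (simp add: dvd_diff)
  qed
  moreover have "dist_a m x y = max (\<Sum>i<m. max (u i) 0) (\<Sum>i<m. max (- u i) 0)"
    by (simp add: dist_a_eq_max_sums u_def)
  ultimately show "2 \<le> dist_a m x y"
    using weighted_sum_not_dvd[of m u] by fastforce
next
  let ?C = "{x\<in>lattice_pts m. int (m + 1) dvd (\<Sum>i<m. int (i + 1) * x i)}"
  obtain n where m: "m = Suc n" using assms by (cases m) auto
  define v where "v i = (if i = 0 then 1 else 0) + (if i = n then 1 else 0 :: int)" for i :: nat
  have sum_v: "(\<Sum>i<m. f i * v i) = f 0 + f n" for f :: "nat \<Rightarrow> int"
  proof -
    have "(\<Sum>i<m. f i * v i) = (\<Sum>i<m. (if i = 0 then f i else 0) + (if i = n then f i else 0))"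
      by (intro sum.cong) (auto simp: v_def)
    then show ?thesis by (simp add: sum.distrib m)
  qed
  have "v \<in> ?C" using sum_v[of "\<lambda>i. int (i + 1)"]
    by (simp add: lattice_pts_def v_def m)
  moreover have "(\<lambda>_. 0) \<in> ?C" by (simp add: lattice_pts_def)
  moreover have "(\<lambda>_. 0) \<noteq> v" by (auto simp: v_def fun_eq_iff)
  moreover have "dist_a m (\<lambda>_. 0) v = 2"
  proof -
    have "max (0 - v i) 0 = 0" "max (v i - 0) 0 = 1 * v i" for i by (simp_all add: v_def)
    then have "(\<Sum>i<m. max (0 - v i) 0) = 0" "(\<Sum>i<m. max (v i - 0) 0) = (\<Sum>i<m. 1 * v i)"
      by simp_all
    then show ?thesis using sum_v[of "\<lambda>_. 1"] by (simp add: dist_a_eq_max_sums)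
  qed
  ultimately show "\<exists>x\<in>?C. \<exists>y\<in>?C. x \<noteq> y \<and> dist_a m x y = 2" by blast
qed

lemma anticode_unit_vectors:
  fixes m :: nat
  defines "S \<equiv> insert (\<lambda>_. 0) ((\<lambda>j. (\<lambda>_. 0)(j := 1)) ` {..<m})"
  shows "is_anticode m S 1" and "card S = m + 1"
proof -
  define e where "e j = ((\<lambda>_. 0)(j := 1) :: nat \<Rightarrow> int)" for j
  have S: "S = insert (\<lambda>_. 0) (e ` {..<m})" by (simp add: S_def e_def)
  show "is_anticode m S 1"
    unfolding is_anticode_def
  proof (intro conjI ballI)
    show "S \<subseteq> lattice_pts m" by (auto simp: S e_def lattice_pts_def)
    have unit: "(\<forall>i. x i \<ge> 0) \<and> (\<Sum>i<m. x i) \<le> 1" if "x \<in> S" for x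
      using that by (auto simp: S e_def sum.delta)
    fix x y assume "x \<in> S" "y \<in> S"
    then have "(\<Sum>i<m. max (x i - y i) 0) \<le> (\<Sum>i<m. x i)" "(\<Sum>i<m. max (y i - x i) 0) \<le> (\<Sum>i<m. y i)"
      using unit by (auto intro!: sum_mono)
    moreover have "(\<Sum>i<m. x i) \<le> 1" "(\<Sum>i<m. y i) \<le> 1" using unit \<open>x \<in> S\<close> \<open>y \<in> S\<close> by simp_all
    ultimately show "dist_a m x y \<le> 1" by (simp add: dist_a_eq_max_sums)
  qed
  have "inj_on e {..<m}" by (rule inj_onI) (metis e_def fun_upd_same zero_neq_one fun_upd_other)
  moreover have "e j \<noteq> (\<lambda>_. 0)" for j
    by (metis e_def fun_upd_same zero_neq_one)
  then have "(\<lambda>_. 0) \<notin> e ` {..<m}" by (metis imageE)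
  ultimately show "card S = m + 1" by (simp add: S card_image)
qed

text \<open>The last coordinate has weight \<open>m \<equiv> -1 (mod m + 1)\<close>, so every slice of the code is a
  residue class mod \<open>m + 1\<close>.\<close>

lemma diameter_perfect_weighted_sum:
  assumes "m \<ge> 1"
  shows "diameter_perfect m {x\<in>lattice_pts m. int (m + 1) dvd (\<Sum>i<m. int (i + 1) * x i)} 2"
proof -
  obtain n where m: "m = Suc n" using assms by (cases m) auto
  define w where "w x = (\<Sum>i<m. int (i + 1) * x i)" for x :: "nat \<Rightarrow> int"
  define C where "C = {x\<in>lattice_pts m. int (m + 1) dvd w x}"
  have "approx_density (Suc n) C (1 * of_int (int (m + 1))) (3 * 1 * of_int (int (m + 1)) + 0)"
  proof (rule approx_density_fiber[OF approx_density_lattice_pts])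
    fix y t assume y: "y \<in> lattice_pts n"
    define s where "s = (\<Sum>i<n. int (i + 1) * y i)"
    have "(\<Sum>i<n. int (i + 1) * (y(n := t)) i) = s" unfolding s_def by (intro sum.cong) auto
    then have "w (y(n := t)) = s - t + t * int (m + 1)" by (simp add: w_def m algebra_simps)
    then have "int (m + 1) dvd w (y(n := t)) \<longleftrightarrow> t mod int (m + 1) = s mod int (m + 1)"
      by (simp add: mod_eq_dvd_iff dvd_diff_commute)
    moreover have "y(n := t) \<in> lattice_pts m" using y by (auto simp: lattice_pts_def m)
    ultimately show "y(n := t) \<in> C \<longleftrightarrow> y \<in> lattice_pts n \<and> t mod int (m + 1) = s mod int (m + 1)"
      using y by (simp add: C_def)
  qed (auto simp: C_def m)
  then show ?thesis
    using anticode_unit_vectors[of m] weighted_sum_code_min_dist[OF assms]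
    by (intro diameter_perfectI) (simp_all add: C_def w_def m)
qed

theorem mainTheorem12:
  fixes m r :: nat
  assumes "(m \<in> {1, 2} \<and> r \<ge> 1) \<or> (m \<ge> 3 \<and> r = 1)"
  shows "\<exists>C. diameter_perfect m C (2 * int r)"
proof -
  consider "m = 1" "r \<ge> 1" | "m = 2" "r \<ge> 1" | "m \<ge> 3" "r = 1" using assms by auto
  then show ?thesis
  proof cases
    case 1
    then show ?thesis using diameter_perfect_multiples[of "2 * int r"] by auto
  next
    case 2
    then show ?thesis using diameter_perfect_hexagonal[of "int r"] by auto
  next
    case 3
    then show ?thesis using diameter_perfect_weighted_sum[of m] by auto
  qed
qed

end
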